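(* Let $T=T(n,a,b)$ with $a\ge 0$, $b\ge a+2$ and $2(a+b)<n-1$, let $\ell=n-a-b$ and $x=x(T)$. Suppose $b<\frac{\ell}{2}$. Then (i) if $a\ge1$, then for $i=1,\dots,a$: $x_{v_i}-x_{v_{\ell+1-i}}<x_{v_{i+1}}-x_{v_{\ell-i}}$ and $x_{w_i}-x_{w_{\ell-i}}<x_{v_{i+1}}-x_{v_{\ell-i}}$; (ii) $x_{v_{a+1+i}}-x_{v_{\ell-b+1-i}}>x_{v_{a+2+i}}-x_{v_{\ell-b-i}}>0$ for $i=1,\dots,\lfloor\frac{\ell-b-a-1}{2}\rfloor-1$; (iii) $x_{v_{\ell-b+1}}<x_{v_{\ell-a}}$.
   Context: Hypergraphs have edges that are vertex subsets of size at least two; distance $d_T(u,v)$ in a hypertree is the length of a shortest loose path (an alternating sequence of distinct vertices and distinct edges $(v_0,e_1,v_1,\dots,e_p,v_p)$ with $v_{i-1},v_i\in e_i$ and non-consecutive edges disjoint). $D(T)$ is the distance matrix, $\rho(T)$ its largest eigenvalue, and $x(T)$ the unit positive eigenvector for $\rho(T)$ (distance Perron vector), with entries $x_v$ indexed by vertices. For integers $n,a,b$ with $0\le a\le b$ and $a+b\le\lfloor\frac{n-1}{2}\rfloor$, put $\ell=n-a-b$ and $I=\{1,\dots,a\}\cup\{\ell-b,\dots,\ell-1\}$; $T(n,a,b)$ is the hypertree with vertex set $\{v_1,\dots,v_\ell\}\cup\{w_i:i\in I\}$ and edges $\{v_i,w_i,v_{i+1}\}$ for $i\in I$ and $\{v_i,v_{i+1}\}$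 for $i\in\{1,\dots,\ell-1\}\setminus I$. *)

theory Defs
  imports Complex_Main
begin

text \<open>A hypergraph is given by its edge set E (edges are vertex sets of size at least two).\<close>

definition loose_path :: "'v set set \<Rightarrow> 'v list \<Rightarrow> 'v set list \<Rightarrow> bool" where
  "loose_path E vs es \<longleftrightarrow>
     length vs = Suc (length es) \<and> distinct vs \<and> distinct es \<and> set es \<subseteq> E \<and>
     (\<forall>i < length es. vs ! i \<in> es ! i \<and> vs ! Suc i \<in> es ! i) \<and>
     (\<forall>i < length es. \<forall>j < length es. Suc i < j \<longrightarrow> es ! i \<inter> es ! j = {})"

definition hdist :: "'v set set \<Rightarrow> 'v \<Rightarrow> 'v \<Rightarrow> nat" where
  "hdist E u v = (LEAST p. \<exists>vs es. loose_path E vs es \<and> length es = p \<and>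
                                   hd vs = u \<and> last vs = v)"

definition dist_matrix :: "'v set set \<Rightarrow> 'v \<Rightarrow> 'v \<Rightarrow> real" where
  "dist_matrix E u v = real (hdist E u v)"

definition is_eigenvalue :: "'v set \<Rightarrow> ('v \<Rightarrow> 'v \<Rightarrow> real) \<Rightarrow> real \<Rightarrow> bool" where
  "is_eigenvalue Vs M \<mu> \<longleftrightarrow> (\<exists>y. (\<exists>v\<in>Vs. y v \<noteq> 0) \<and>
      (\<forall>v\<in>Vs. (\<Sum>u\<in>Vs. M v u * y u) = \<mu> * y v))"

definition largest_eigenvalue :: "'v set \<Rightarrow> ('v \<Rightarrow> 'v \<Rightarrow> real) \<Rightarrow> real \<Rightarrow> bool" where
  "largest_eigenvalue Vs M \<rho> \<longleftrightarrow> is_eigenvalue Vs M \<rho> \<and> (\<forall>\<mu>. is_eigenvalue Vs M \<mu> \<longrightarrow> \<mu> \<le> \<rho>)"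

text \<open>x is the unit positive eigenvector for the largest eigenvalue (the Perron vector);
only its values on the vertex set are relevant.\<close>
definition perron_vector :: "'v set \<Rightarrow> ('v \<Rightarrow> 'v \<Rightarrow> real) \<Rightarrow> ('v \<Rightarrow> real) \<Rightarrow> bool" where
  "perron_vector Vs M x \<longleftrightarrow> (\<exists>\<rho>. largest_eigenvalue Vs M \<rho> \<and>
      (\<forall>v\<in>Vs. x v > 0) \<and> (\<Sum>v\<in>Vs. (x v)\<^sup>2) = 1 \<and>
      (\<forall>v\<in>Vs. (\<Sum>u\<in>Vs. M v u * x u) = \<rho> * x v))"

datatype vtx = V nat | W nat

definition tI :: "nat \<Rightarrow> nat \<Rightarrow> nat \<Rightarrow> nat set" where
  "tI n a b = {1..a} \<union> {n - a - b - b .. n - a - b - 1}"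

definition tVerts :: "nat \<Rightarrow> nat \<Rightarrow> nat \<Rightarrow> vtx set" where
  "tVerts n a b = V ` {1..n - a - b} \<union> W ` tI n a b"

definition tEdges :: "nat \<Rightarrow> nat \<Rightarrow> nat \<Rightarrow> vtx set set" where
  "tEdges n a b = (\<lambda>i. {V i, W i, V (Suc i)}) ` tI n a b
                \<union> (\<lambda>i. {V i, V (Suc i)}) ` ({1..< n - a - b} - tI n a b)"

end

theory Submission
  imports Defs
begin

(* Distances in T(n,a,b) are explicit, so the eigen-equation rho x = D x can be differenced
   along the path.  Writing y_k = x(v_k) and w_i = x(w_i) (w_i = 0 if edge i has no pendant),
   one gets rho (y_(j+1) - 2 y_j + y_(j-1)) = 2 y_j + w_(j-1) + w_j, and every pendant satisfies
   (2 rho + 3) w_i = rho (y_i + y_(i+1)) + const.  Hence for a reflection centre c the reflected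
   differences F_j = y_j - y_(c-j) obey the same recurrence, where the pendant terms equal
   kappa (F_i + F_(i+1)) with kappa = rho / (2 rho + 3) < rho if both i and c-1-i carry pendants
   and have a known sign otherwise.  A discrete maximum principle (defect_antimono) propagates
   sign and monotonicity of F through such a window.  Reflecting about the centre of the path
   gives (i), about the midpoint of v_(a+1) and v_(l-b+1) gives (ii).
   For (iii) reflect about the midpoint of v_(l-b+1) and v_(l-a): either the maximum principle
   applies directly, or all reflected differences there are nonnegative, and then
   rho (x(v_(l-a)) - x(v_(l-b+1))) splits into nonnegative mirror pairs plus a positive term. *)

section \<open>A discrete maximum principle\<close>

text \<open>The residual of the recurrence
  \<open>r (g\<^sub>j\<^sub>+\<^sub>1 - 2 g\<^sub>j + g\<^sub>j\<^sub>-\<^sub>1) = 2 g\<^sub>j + k\<^sub>j\<^sub>-\<^sub>1 (g\<^sub>j\<^sub>-\<^sub>1 + g\<^sub>j) + k\<^sub>j (g\<^sub>j + g\<^sub>j\<^sub>+\<^sub>1)\<close>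
  obeyed by reflected differences of the eigenvector, the pendant terms contributing the \<open>k\<close>.\<close>
definition defect :: "real \<Rightarrow> (nat \<Rightarrow> real) \<Rightarrow> (nat \<Rightarrow> real) \<Rightarrow> nat \<Rightarrow> real" where
  "defect r k g j = 2 * g j + k (j - 1) * (g (j - 1) + g j) + k j * (g j + g (j + 1))
                    - r * (g (j + 1) - 2 * g j + g (j - 1))"

lemma defect_step:
  fixes g0 g1 g2 k0 k1 r :: real
  assumes k: "0 \<le> k0" "0 \<le> k1" "k1 < r"
    and g: "g1 \<le> g0" "g1 \<le> 0" "g0 + g1 \<le> 0"
    and e: "0 \<le> 2 * g1 + k0 * (g0 + g1) + k1 * (g1 + g2) - r * (g2 - 2 * g1 + g0)" (is "_ \<le> ?e")
  shows "g2 \<le> g1" and "(0::real) < ?e \<or> g1 < 0 \<Longrightarrow> g2 < g1"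
proof -
  have "(r - k1) * (g2 - g1) = r * (g1 - g0) + 2 * g1 + k0 * (g0 + g1) + 2 * (k1 * g1) - ?e"
    by (simp add: algebra_simps)
  moreover have "r * (g1 - g0) \<le> 0" "k0 * (g0 + g1) \<le> 0" "k1 * g1 \<le> 0"
    using k g by (simp_all add: mult_nonneg_nonpos)
  ultimately have bound: "(r - k1) * (g2 - g1) \<le> 2 * g1 - ?e"
    by linarith
  have pos: "0 < r - k1" using k by simp
  show "g2 \<le> g1"
  proof (rule ccontr)
    assume "\<not> g2 \<le> g1"
    then have "0 < (r - k1) * (g2 - g1)" using pos by simp
    then show False using bound e g by linarith
  qed
  show "g2 < g1" if "(0::real) < ?e \<or> g1 < 0"
  proof (rule ccontr)
    assume "\<not> g2 < g1"
    then have "0 \<le> (r - k1) * (g2 - g1)" using pos by simp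
    then show False using bound e g that by linarith
  qed
qed

lemma defect_antimono:
  fixes g k :: "nat \<Rightarrow> real"
  assumes k: "\<And>i. 0 \<le> k i" "\<And>i. k i < r"
    and defect: "\<And>j. 1 \<le> j \<Longrightarrow> j \<le> N \<Longrightarrow> 0 \<le> defect r k g j"
    and start: "g 1 \<le> 0" "g 1 \<le> g 0" "g 0 + g 1 \<le> 0"
    and "m \<le> N"
  shows "g (m + 1) \<le> g m \<and> g (m + 1) \<le> 0 \<and> g m + g (m + 1) \<le> 0"
  using \<open>m \<le> N\<close>
proof (induction m)
  case 0
  then show ?case using start by simp
next
  case (Suc m)
  then have IH: "g (m + 1) \<le> g m" "g (m + 1) \<le> 0" "g m + g (m + 1) \<le> 0"
    by auto
  have "g (m + 2) \<le> g (m + 1)"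
    using defect_step(1)[OF k(1) k(1) k(2) IH] defect[of "m + 1"] Suc.prems
    by (simp add: defect_def numeral_2_eq_2)
  then show ?case using IH by (simp add: numeral_2_eq_2)
qed

lemma defect_antimono_le:
  fixes g k :: "nat \<Rightarrow> real"
  assumes k: "\<And>i. 0 \<le> k i" "\<And>i. k i < r"
    and defect: "\<And>j. 1 \<le> j \<Longrightarrow> j \<le> N \<Longrightarrow> 0 \<le> defect r k g j"
    and start: "g 1 \<le> 0" "g 1 \<le> g 0" "g 0 + g 1 \<le> 0"
    and im: "i \<le> m" "m \<le> N + 1"
  shows "g m \<le> g i"
proof (rule lift_Suc_antimono_le_ivl[where N = "{..N}"])
  show "g (Suc n) \<le> g n" if "n \<in> {..N}" for n
    using defect_antimono[OF k defect start, of n] that by simp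
qed (use im in auto)

lemma defect_strict_decrease:
  fixes g k :: "nat \<Rightarrow> real"
  assumes k: "\<And>i. 0 \<le> k i" "\<And>i. k i < r"
    and defect: "\<And>j. 1 \<le> j \<Longrightarrow> j \<le> N \<Longrightarrow> 0 \<le> defect r k g j"
    and start: "g 1 \<le> 0" "g 1 \<le> g 0" "g 0 + g 1 \<le> 0"
    and j: "1 \<le> j" "j \<le> N"
    and strict: "0 < defect r k g j \<or> g 1 < 0"
  shows "g (j + 1) < g j"
proof -
  obtain m where m: "j = m + 1" using j by (cases j) auto
  have IH: "g (m + 1) \<le> g m" "g (m + 1) \<le> 0" "g m + g (m + 1) \<le> 0"
    using defect_antimono[OF k defect start, of m] j m by auto
  have "g j \<le> g 1"
    using defect_antimono_le[OF k defect start, where i = 1 and m = j] j by simp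
  then have "0 < defect r k g j \<or> g (m + 1) < 0"
    using strict m by auto
  then show ?thesis
    using defect_step(2)[OF k(1) k(1) k(2) IH] defect[OF j] m
    by (simp add: defect_def numeral_2_eq_2)
qed

lemma defect_uminus: "defect r k (\<lambda>i. - g i) j = - defect r k g j"
  by (simp add: defect_def algebra_simps)

lemma defect_reverse:
  assumes "1 \<le> m" "m < h"
  shows "defect r (\<lambda>i. k (h - 1 - i)) (\<lambda>i. g (h - i)) m = defect r k g (h - m)"
proof -
  have "h - 1 - (m - 1) = h - m" "h - 1 - m = h - m - 1" "h - (m + 1) = h - m - 1"
    "h - (m - 1) = h - m + 1"
    using assms by auto
  then show ?thesis unfolding defect_def by (simp add: algebra_simps)
qed

lemma sum_involution_double:
  fixes g :: "'a \<Rightarrow> 'b::semiring_1"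
  assumes "\<And>k. k \<in> A \<Longrightarrow> \<tau> k \<in> A" "\<And>k. k \<in> A \<Longrightarrow> \<tau> (\<tau> k) = k"
  shows "2 * sum g A = (\<Sum>k\<in>A. g k + g (\<tau> k))"
proof -
  have "sum g A = sum (\<lambda>k. g (\<tau> k)) A"
    by (rule sum.reindex_bij_witness[where i = \<tau> and j = \<tau>]) (auto simp: assms)
  then show ?thesis by (simp add: sum.distrib mult_2)
qed

section \<open>Distances in \<open>T(n,a,b)\<close>\<close>

fun tdist :: "vtx \<Rightarrow> vtx \<Rightarrow> nat" where
  "tdist (V j) (V k) = (if j \<le> k then k - j else j - k)"
| "tdist (V j) (W i) = (if i < j then j - i else Suc i - j)"
| "tdist (W i) (V j) = (if i < j then j - i else Suc i - j)"
| "tdist (W i) (W k) = (if i = k then 0 else if i \<le> k then Suc (k - i) else Suc (i - k))"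

lemma tdist_self [simp]: "tdist u u = 0"
  by (cases u) auto

lemma tdist_sym: "tdist u v = tdist v u"
  by (cases u; cases v) auto

lemma tdist_edge_le:
  assumes "e \<in> tEdges n a b" "p \<in> e" "q \<in> e"
  shows "tdist u p \<le> tdist u q + 1"
  using assms unfolding tEdges_def by (cases u) (auto split: if_splits)

lemma tdist_le_loose_path:
  assumes path: "loose_path (tEdges n a b) vs es"
  shows "tdist (hd vs) (last vs) \<le> length es"
proof -
  have len: "length vs = Suc (length es)"
    using path unfolding loose_path_def by simp
  have "tdist (hd vs) (vs ! m) \<le> m" if "m \<le> length es" for m
    using that
  proof (induction m)
    case 0
    then show ?case using len by (cases vs) auto
  next
    case (Suc m)
    have e: "es ! m \<in> tEdges n a b" "vs ! m \<in> es ! m" "vs ! Suc m \<in> es ! m"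
      using path Suc.prems unfolding loose_path_def by auto
    have "tdist (hd vs) (vs ! Suc m) \<le> tdist (hd vs) (vs ! m) + 1"
      by (rule tdist_edge_le[OF e(1) e(3) e(2)])
    with Suc show ?case by simp
  qed
  moreover have "last vs = vs ! length es"
    using len by (metis Zero_not_Suc diff_Suc_1 last_conv_nth list.size(3))
  ultimately show ?thesis by simp
qed

lemma loose_path_rev:
  assumes "loose_path E vs es"
  shows "loose_path E (rev vs) (rev es)"
proof -
  let ?L = "length es"
  from assms have l: "length vs = Suc ?L" and d: "distinct vs" "distinct es" "set es \<subseteq> E"
    and c: "\<forall>i < ?L. vs ! i \<in> es ! i \<and> vs ! Suc i \<in> es ! i"
    and dj: "\<forall>i < ?L. \<forall>j < ?L. Suc i < j \<longrightarrow> es ! i \<inter> es ! j = {}"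
    unfolding loose_path_def by auto
  have "rev vs ! i \<in> rev es ! i \<and> rev vs ! Suc i \<in> rev es ! i" if "i < ?L" for i
  proof -
    have "rev es ! i = es ! (?L - 1 - i)" "rev vs ! Suc i = vs ! (?L - 1 - i)"
      "rev vs ! i = vs ! Suc (?L - 1 - i)"
      using that l by (simp_all add: rev_nth Suc_diff_Suc)
    then show ?thesis using c that by auto
  qed
  moreover have "rev es ! i \<inter> rev es ! j = {}" if "i < ?L" "j < ?L" "Suc i < j" for i j
  proof -
    have "rev es ! i = es ! (?L - 1 - i)" "rev es ! j = es ! (?L - 1 - j)"
      using that by (simp_all add: rev_nth)
    moreover have "es ! (?L - 1 - j) \<inter> es ! (?L - 1 - i) = {}"
      using dj that by auto
    ultimately show ?thesis by auto
  qed
  ultimately show ?thesis unfolding loose_path_def using l d by auto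
qed

definition path_edge :: "nat \<Rightarrow> nat \<Rightarrow> nat \<Rightarrow> nat \<Rightarrow> vtx set" where
  "path_edge n a b m = (if m \<in> tI n a b then {V m, W m, V (Suc m)} else {V m, V (Suc m)})"

definition segment_verts :: "bool \<Rightarrow> bool \<Rightarrow> nat \<Rightarrow> nat \<Rightarrow> vtx list" where
  "segment_verts sw ew j k =
     map (\<lambda>m. if sw \<and> m = j then W j else if ew \<and> m = k then W (k - 1) else V m) [j..<Suc k]"

lemma path_edge_in_tEdges: "1 \<le> m \<Longrightarrow> m < n - a - b \<Longrightarrow> path_edge n a b m \<in> tEdges n a b"
  unfolding path_edge_def tEdges_def by auto

lemma inj_path_edge: "inj (path_edge n a b)"
proof (rule injI)
  fix m m' assume eq: "path_edge n a b m = path_edge n a b m'"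
  then have "V m \<in> path_edge n a b m'" "V m' \<in> path_edge n a b m"
    unfolding path_edge_def by (auto split: if_splits)
  then show "m = m'" unfolding path_edge_def by (auto split: if_splits)
qed

lemma loose_path_segment:
  assumes "1 \<le> j" "j < k" "k \<le> n - a - b"
    and "sw \<Longrightarrow> j \<in> tI n a b" "ew \<Longrightarrow> k - 1 \<in> tI n a b" "sw \<and> ew \<Longrightarrow> Suc j < k"
  shows "loose_path (tEdges n a b) (segment_verts sw ew j k) (map (path_edge n a b) [j..<k])"
proof -
  let ?f = "\<lambda>m. if sw \<and> m = j then W j else if ew \<and> m = k then W (k - 1) else V m"
  let ?vs = "segment_verts sw ew j k" and ?es = "map (path_edge n a b) [j..<k]"
  have "inj_on ?f {j..<Suc k}"
    unfolding inj_on_def using assms by (auto split: if_splits)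
  then have "distinct ?vs"
    unfolding segment_verts_def by (simp add: distinct_map del: upt_Suc)
  moreover have "distinct ?es"
    using inj_on_subset[OF inj_path_edge subset_UNIV] by (simp add: distinct_map)
  moreover have "set ?es \<subseteq> tEdges n a b"
    using assms path_edge_in_tEdges by auto
  moreover have "?vs ! i \<in> ?es ! i \<and> ?vs ! Suc i \<in> ?es ! i" if "i < length ?es" for i
  proof -
    have "?vs ! i = ?f (j + i)" "?vs ! Suc i = ?f (j + Suc i)" "?es ! i = path_edge n a b (j + i)"
      using that unfolding segment_verts_def by (simp_all del: upt_Suc)
    then show ?thesis using assms that unfolding path_edge_def by (auto split: if_splits)
  qed
  moreover have "?es ! i \<inter> ?es ! i' = {}" if "i < length ?es" "i' < length ?es" "Suc i < i'" for i i'
    using that unfolding path_edge_def by (auto split: if_splits)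
  moreover have "length ?vs = Suc (length ?es)"
    unfolding segment_verts_def using assms(2) by (simp del: upt_Suc)
  ultimately show ?thesis unfolding loose_path_def by blast
qed

lemma hdist_tEdges:
  assumes ab: "a + b < n - a - b" and u: "u \<in> tVerts n a b" and v: "v \<in> tVerts n a b"
  shows "hdist (tEdges n a b) u v = tdist u v"
proof -
  let ?l = "n - a - b"
  define connects where "connects u v \<longleftrightarrow>
    (\<exists>vs es. loose_path (tEdges n a b) vs es \<and> length es = tdist u v \<and> hd vs = u \<and> last vs = v)"
    for u v
  have connects_sym: "connects v u" if uv: "connects u v" for u v
  proof -
    obtain vs es where "loose_path (tEdges n a b) vs es" "length es = tdist u v" "hd vs = u" "last vs = v"
      using uv unfolding connects_def by blast
    moreover have "vs \<noteq> []" using calculation(1) unfolding loose_path_def by auto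
    ultimately show ?thesis unfolding connects_def using loose_path_rev tdist_sym
      by (intro exI[of _ "rev vs"] exI[of _ "rev es"]) (auto simp: hd_rev last_rev)
  qed
  have connects_self: "connects u u" for u
    unfolding connects_def by (intro exI[of _ "[u]"] exI[of _ "[]"]) (simp add: loose_path_def)
  have segment: "connects (if sw then W j else V j) (if ew then W (k - 1) else V k)"
    if "1 \<le> j" "j < k" "k \<le> ?l" "sw \<Longrightarrow> j \<in> tI n a b" "ew \<Longrightarrow> k - 1 \<in> tI n a b"
      "sw \<and> ew \<Longrightarrow> Suc j < k" for sw ew j k
  proof -
    have "hd (segment_verts sw ew j k) = (if sw then W j else V j)"
      "last (segment_verts sw ew j k) = (if ew then W (k - 1) else V k)"
      using that unfolding segment_verts_def by (auto simp: hd_map last_map)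
    moreover have "tdist (if sw then W j else V j) (if ew then W (k - 1) else V k) = k - j"
      using that by auto
    ultimately show ?thesis
      unfolding connects_def using loose_path_segment[OF that]
      by (intro exI[of _ "segment_verts sw ew j k"] exI[of _ "map (path_edge n a b) [j..<k]"]) auto
  qed
  have I: "1 \<le> i \<and> i < ?l" if "i \<in> tI n a b" for i
    using ab that unfolding tI_def by auto
  have "connects u v"
  proof (cases u; cases v)
    fix j k assume "u = V j" "v = V k"
    then show ?thesis
      using u v segment[of j k False False] segment[of k j False False]
        connects_sym[of "V k" "V j"] connects_self
      unfolding tVerts_def by (cases j k rule: linorder_cases) auto
  next
    fix j i assume "u = V j" "v = W i"
    then show ?thesis
      using u v I[of i] segment[of j "Suc i" False True] segment[of i j True False]
        connects_sym[of "W i" "V j"]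
      unfolding tVerts_def by (cases "i < j") auto
  next
    fix i j assume "u = W i" "v = V j"
    then show ?thesis
      using u v I[of i] segment[of i j True False] segment[of j "Suc i" False True]
        connects_sym[of "V j" "W i"]
      unfolding tVerts_def by (cases "i < j") auto
  next
    fix i k assume "u = W i" "v = W k"
    then show ?thesis
      using u v I[of i] I[of k] segment[of i "Suc k" True True] segment[of k "Suc i" True True]
        connects_sym[of "W k" "W i"] connects_self
      unfolding tVerts_def by (cases i k rule: linorder_cases) auto
  qed
  then show ?thesis
    unfolding hdist_def connects_def
    by (intro Least_equality) (auto dest: tdist_le_loose_path)
qed

lemma real_tdist_VV: "real (tdist (V j) (V k)) = \<bar>real j - real k\<bar>"
  by (auto simp: of_nat_diff)

lemma real_tdist_VW: "real (tdist (V j) (W i)) = (if i < j then real j - real i else real i + 1 - real j)"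
  by (auto simp: of_nat_diff)

lemma real_tdist_WV: "real (tdist (W i) (V j)) = (if i < j then real j - real i else real i + 1 - real j)"
  by (auto simp: of_nat_diff)

lemma real_tdist_WW: "real (tdist (W i) (W k)) = (if i = k then 0 else \<bar>real i - real k\<bar> + 1)"
  by (auto simp: of_nat_diff)

declare tdist.simps [simp del]

lemma sum_delta_mult:
  fixes f :: "'a \<Rightarrow> 'b::semiring_0"
  assumes "finite A"
  shows "(\<Sum>k\<in>A. (if k = j then c else 0) * f k) = (if j \<in> A then c * f j else 0)"
proof -
  have "(\<Sum>k\<in>A. (if k = j then c else 0) * f k) = (\<Sum>k\<in>A. if k = j then c * f k else 0)"
    by (rule sum.cong) auto
  then show ?thesis using assms by simp
qed

section \<open>The eigen-equation along the path\<close>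

locale T_eigenvector =
  fixes n a b l :: nat and x :: "vtx \<Rightarrow> real" and \<rho> :: real
  assumes b_ge: "a + 2 \<le> b" and l_gt: "2 * b < l" and l_eq: "l = n - a - b"
    and x_pos: "\<And>v. v \<in> tVerts n a b \<Longrightarrow> 0 < x v"
    and eigen: "\<And>v. v \<in> tVerts n a b \<Longrightarrow>
        (\<Sum>u\<in>tVerts n a b. dist_matrix (tEdges n a b) v u * x u) = \<rho> * x v"
begin

definition y :: "nat \<Rightarrow> real" where
  "y k = x (V k)"

definition w :: "nat \<Rightarrow> real" where
  "w i = (if i \<in> tI n a b then x (W i) else 0)"

definition ysum :: "vtx \<Rightarrow> real" where
  "ysum v = (\<Sum>k\<in>{1..l}. real (tdist v (V k)) * y k)"

definition wsum :: "vtx \<Rightarrow> real" where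
  "wsum v = (\<Sum>i\<in>{1..<l}. real (tdist v (W i)) * w i)"

lemma mem_tI: "i \<in> tI n a b \<longleftrightarrow> (1 \<le> i \<and> i \<le> a) \<or> (l - b \<le> i \<and> i < l)"
  using l_gt unfolding tI_def l_eq by auto

lemma tVerts_eq: "tVerts n a b = V ` {1..l} \<union> W ` tI n a b"
  unfolding tVerts_def l_eq ..

lemma tI_subset: "tI n a b \<subseteq> {1..<l}"
  using l_gt b_ge by (auto simp: mem_tI)

lemma y_pos: "1 \<le> k \<Longrightarrow> k \<le> l \<Longrightarrow> 0 < y k"
  using x_pos[of "V k"] unfolding y_def tVerts_eq by auto

lemma w_pos: "i \<in> tI n a b \<Longrightarrow> 0 < w i"
  using x_pos[of "W i"] unfolding w_def tVerts_eq by auto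

lemma w_nonneg: "0 \<le> w i"
  using w_pos[of i] unfolding w_def by auto

lemma eigen_tdist:
  assumes v: "v \<in> tVerts n a b"
  shows "ysum v + wsum v = \<rho> * x v"
proof -
  have ab: "a + b < n - a - b" using b_ge l_gt l_eq by simp
  have "\<rho> * x v = (\<Sum>u\<in>tVerts n a b. real (tdist v u) * x u)"
    using eigen[OF v] by (simp add: dist_matrix_def hdist_tEdges[OF ab v] tVerts_def)
  also have "\<dots> = (\<Sum>u\<in>V ` {1..l}. real (tdist v u) * x u) + (\<Sum>u\<in>W ` tI n a b. real (tdist v u) * x u)"
    unfolding tVerts_eq by (rule sum.union_disjoint) (auto simp: tI_def)
  also have "(\<Sum>u\<in>V ` {1..l}. real (tdist v u) * x u) = ysum v"
    unfolding ysum_def y_def by (subst sum.reindex) (auto simp: inj_on_def)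
  also have "(\<Sum>u\<in>W ` tI n a b. real (tdist v u) * x u) = (\<Sum>i\<in>tI n a b. real (tdist v (W i)) * w i)"
    unfolding w_def by (subst sum.reindex) (auto simp: inj_on_def)
  also have "\<dots> = wsum v"
    unfolding wsum_def w_def using tI_subset
    by (intro sum.mono_neutral_left) auto
  finally show ?thesis by simp
qed

lemma eigen_V: "1 \<le> j \<Longrightarrow> j \<le> l \<Longrightarrow> ysum (V j) + wsum (V j) = \<rho> * y j"
  using eigen_tdist[of "V j"] unfolding tVerts_eq y_def by auto

lemma eigen_W: "i \<in> tI n a b \<Longrightarrow> ysum (W i) + wsum (W i) = \<rho> * w i"
  using eigen_tdist[of "W i"] unfolding tVerts_eq w_def by auto

lemma second_difference:
  assumes "2 \<le> j" "j + 1 \<le> l"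
  shows "\<rho> * (y (j + 1) - 2 * y j + y (j - 1)) = 2 * y j + w (j - 1) + w j"
proof -
  have cV: "real (tdist (V (j + 1)) (V k)) - 2 * real (tdist (V j) (V k)) + real (tdist (V (j - 1)) (V k))
      = (if k = j then 2 else 0)" for k
    using assms by (auto simp: real_tdist_VV abs_if)
  have cW: "real (tdist (V (j + 1)) (W i)) - 2 * real (tdist (V j) (W i)) + real (tdist (V (j - 1)) (W i))
      = (if i = j - 1 then 1 else 0) + (if i = j then 1 else 0)" for i
    using assms by (auto simp: real_tdist_VW)
  have "ysum (V (j + 1)) - 2 * ysum (V j) + ysum (V (j - 1))
      = (\<Sum>k\<in>{1..l}. (real (tdist (V (j + 1)) (V k)) - 2 * real (tdist (V j) (V k))
                      + real (tdist (V (j - 1)) (V k))) * y k)"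
    unfolding ysum_def
    by (simp add: left_diff_distrib distrib_right sum.distrib sum_subtractf sum_distrib_left mult.assoc)
  also have "\<dots> = 2 * y j"
    unfolding cV using assms by (simp add: sum_delta_mult)
  finally have Y: "ysum (V (j + 1)) - 2 * ysum (V j) + ysum (V (j - 1)) = 2 * y j" .
  have "wsum (V (j + 1)) - 2 * wsum (V j) + wsum (V (j - 1))
      = (\<Sum>i\<in>{1..<l}. (real (tdist (V (j + 1)) (W i)) - 2 * real (tdist (V j) (W i))
                      + real (tdist (V (j - 1)) (W i))) * w i)"
    unfolding wsum_def
    by (simp add: left_diff_distrib distrib_right sum.distrib sum_subtractf sum_distrib_left mult.assoc)
  also have "\<dots> = w (j - 1) + w j"
    unfolding cW distrib_right using assms by (auto simp: sum.distrib sum_delta_mult Suc_le_eq)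
  finally have W: "wsum (V (j + 1)) - 2 * wsum (V j) + wsum (V (j - 1)) = w (j - 1) + w j" .
  have "ysum (V (j + 1)) + wsum (V (j + 1)) = \<rho> * y (j + 1)" "ysum (V j) + wsum (V j) = \<rho> * y j"
    "ysum (V (j - 1)) + wsum (V (j - 1)) = \<rho> * y (j - 1)"
    using eigen_V assms by auto
  then show ?thesis
    using Y W by (simp add: algebra_simps)
qed

definition total :: real where
  "total = (\<Sum>k\<in>{1..l}. y k) + (\<Sum>i\<in>{1..<l}. w i)"

lemma pendant_eq:
  assumes i: "i \<in> tI n a b"
  shows "(2 * \<rho> + 3) * w i = \<rho> * (y i + y (i + 1)) + total"
proof -
  have il: "1 \<le> i" "i + 1 \<le> l" using i tI_subset by auto
  have cV: "2 * real (tdist (W i) (V k)) = real (tdist (V i) (V k)) + real (tdist (V (i + 1)) (V k)) + 1" for k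
    by (auto simp: real_tdist_VV real_tdist_WV)
  have cW: "2 * real (tdist (W i) (W i')) = real (tdist (V i) (W i')) + real (tdist (V (i + 1)) (W i')) + 1
      - (if i' = i then 3 else 0)" for i'
    by (auto simp: real_tdist_VW real_tdist_WW)
  have "2 * ysum (W i) = (\<Sum>k\<in>{1..l}. (2 * real (tdist (W i) (V k))) * y k)"
    unfolding ysum_def by (simp add: sum_distrib_left mult.assoc)
  also have "\<dots> = (\<Sum>k\<in>{1..l}. real (tdist (V i) (V k)) * y k + real (tdist (V (i + 1)) (V k)) * y k + y k)"
    unfolding cV by (simp add: distrib_right)
  also have "\<dots> = ysum (V i) + ysum (V (i + 1)) + (\<Sum>k\<in>{1..l}. y k)"
    unfolding ysum_def by (simp add: sum.distrib)
  finally have Y: "2 * ysum (W i) = ysum (V i) + ysum (V (i + 1)) + (\<Sum>k\<in>{1..l}. y k)" .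
  have "2 * wsum (W i) = (\<Sum>i'\<in>{1..<l}. (2 * real (tdist (W i) (W i'))) * w i')"
    unfolding wsum_def by (simp add: sum_distrib_left mult.assoc)
  also have "\<dots> = (\<Sum>i'\<in>{1..<l}. real (tdist (V i) (W i')) * w i' + real (tdist (V (i + 1)) (W i')) * w i'
      + w i' - (if i' = i then 3 else 0) * w i')"
    unfolding cW by (simp add: algebra_simps)
  also have "\<dots> = wsum (V i) + wsum (V (i + 1)) + (\<Sum>i'\<in>{1..<l}. w i') - 3 * w i"
    unfolding wsum_def using il by (simp add: sum.distrib sum_subtractf sum_delta_mult)
  finally have W: "2 * wsum (W i) = wsum (V i) + wsum (V (i + 1)) + (\<Sum>i'\<in>{1..<l}. w i') - 3 * w i" .
  have "ysum (V i) + wsum (V i) = \<rho> * y i" "ysum (V (i + 1)) + wsum (V (i + 1)) = \<rho> * y (i + 1)"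
    using eigen_V il by auto
  then show ?thesis
    using Y W eigen_W[OF i] unfolding total_def by (simp add: algebra_simps)
qed

lemma eigen_difference:
  assumes "1 \<le> s" "s \<le> l" "1 \<le> t" "t \<le> l"
  shows "\<rho> * (y t - y s) = (\<Sum>k\<in>{1..l}. (real (tdist (V t) (V k)) - real (tdist (V s) (V k))) * y k)
      + (\<Sum>i\<in>{1..<l}. (real (tdist (V t) (W i)) - real (tdist (V s) (W i))) * w i)"
  using eigen_V[of t] eigen_V[of s] assms unfolding ysum_def wsum_def
  by (simp add: left_diff_distrib sum_subtractf algebra_simps)

lemma rho_pos: "0 < \<rho>"
proof -
  have "0 \<le> y k" if "k \<in> {1..l}" for k
    using y_pos that by (simp add: less_imp_le)
  then have "real (tdist (V 1) (V 2)) * y 2 \<le> ysum (V 1)"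
    unfolding ysum_def using l_gt b_ge by (intro member_le_sum) auto
  moreover have "real (tdist (V 1) (V 2)) = 1" by (simp add: real_tdist_VV)
  moreover have "0 < y 2" "0 < y 1" using y_pos l_gt b_ge by auto
  moreover have "0 \<le> wsum (V 1)"
    unfolding wsum_def by (rule sum_nonneg) (simp add: w_nonneg)
  ultimately have "0 < \<rho> * y 1" using eigen_V[of 1] l_gt by simp
  with \<open>0 < y 1\<close> show ?thesis by (simp add: zero_less_mult_iff)
qed

definition kappa :: real where
  "kappa = \<rho> / (2 * \<rho> + 3)"

lemma kappa_pos: "0 < kappa"
  unfolding kappa_def using rho_pos by simp

lemma kappa_less_rho: "kappa < \<rho>"
proof -
  have "0 < \<rho> * (2 * \<rho> + 2)"
    using rho_pos by simp
  moreover have "\<rho> * (2 * \<rho> + 3) = \<rho> + \<rho> * (2 * \<rho> + 2)"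
    by (simp add: algebra_simps)
  ultimately have "\<rho> < \<rho> * (2 * \<rho> + 3)"
    by linarith
  then show ?thesis
    unfolding kappa_def using rho_pos by (simp add: divide_less_eq)
qed

lemma two_kappa_less_1: "2 * kappa < 1"
  unfolding kappa_def using rho_pos by (simp add: field_simps)

section \<open>Reflected differences\<close>

definition tail :: "nat \<Rightarrow> real" where
  "tail c = (\<Sum>k\<in>{1..l}. if c \<le> k then y k else 0) + (\<Sum>i\<in>{1..<l}. if c - 1 \<le> i then w i else 0)"

definition rdiff :: "nat \<Rightarrow> nat \<Rightarrow> real" where
  "rdiff c j = y j - y (c - j)"

text \<open>Under \<open>j \<mapsto> c - j\<close> the pendant on the edge \<open>v\<^sub>i v\<^sub>i\<^sub>+\<^sub>1\<close> is mirrored to the one on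
  the edge \<open>v\<^sub>c\<^sub>-\<^sub>1\<^sub>-\<^sub>i v\<^sub>c\<^sub>-\<^sub>i\<close>.\<close>
definition rpdiff :: "nat \<Rightarrow> nat \<Rightarrow> real" where
  "rpdiff c i = w i - w (c - 1 - i)"

lemma rdiff_end_difference:
  assumes c: "4 \<le> c" "c \<le> l + 1"
  shows "\<rho> * (rdiff c 2 - rdiff c 1) = 2 * rdiff c 1 + rpdiff c 1 - 2 * tail c"
proof -
  have c': "1 \<le> c - 1" "1 \<le> c - 2" "c - 1 \<le> l" "c - 2 < l"
    using c by auto
  have cV: "1 \<le> k \<Longrightarrow> real (tdist (V 2) (V k)) - real (tdist (V 1) (V k))
      + real (tdist (V (c - 1)) (V k)) - real (tdist (V (c - 2)) (V k))
     = (if k = 1 then 2 else 0) - (if k = c - 1 then 2 else 0) - 2 * (if c \<le> k then 1 else 0)" for k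
    using c by (auto simp: real_tdist_VV abs_if)
  have cW: "1 \<le> i \<Longrightarrow> real (tdist (V 2) (W i)) - real (tdist (V 1) (W i))
      + real (tdist (V (c - 1)) (W i)) - real (tdist (V (c - 2)) (W i))
     = (if i = 1 then 1 else 0) - (if i = c - 2 then 1 else 0) - 2 * (if c - 1 \<le> i then 1 else 0)" for i
    using c by (auto simp: real_tdist_VW)
  have "ysum (V 2) - ysum (V 1) + ysum (V (c - 1)) - ysum (V (c - 2))
      = (\<Sum>k\<in>{1..l}. (real (tdist (V 2) (V k)) - real (tdist (V 1) (V k))
          + real (tdist (V (c - 1)) (V k)) - real (tdist (V (c - 2)) (V k))) * y k)"
    unfolding ysum_def by (simp add: left_diff_distrib distrib_right sum.distrib sum_subtractf)
  also have "\<dots> = (\<Sum>k\<in>{1..l}. (if k = 1 then 2 else 0) * y k - (if k = c - 1 then 2 else 0) * y k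
      - 2 * (if c \<le> k then y k else 0))"
    by (intro sum.cong refl) (subst cV; auto simp: left_diff_distrib)
  also have "\<dots> = 2 * y 1 - 2 * y (c - 1) - 2 * (\<Sum>k\<in>{1..l}. if c \<le> k then y k else 0)"
    using c c' by (simp add: sum_subtractf sum_delta_mult sum_distrib_left)
  finally have Y: "ysum (V 2) - ysum (V 1) + ysum (V (c - 1)) - ysum (V (c - 2))
      = 2 * y 1 - 2 * y (c - 1) - 2 * (\<Sum>k\<in>{1..l}. if c \<le> k then y k else 0)" .
  have "wsum (V 2) - wsum (V 1) + wsum (V (c - 1)) - wsum (V (c - 2))
      = (\<Sum>i\<in>{1..<l}. (real (tdist (V 2) (W i)) - real (tdist (V 1) (W i))
          + real (tdist (V (c - 1)) (W i)) - real (tdist (V (c - 2)) (W i))) * w i)"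
    unfolding wsum_def by (simp add: left_diff_distrib distrib_right sum.distrib sum_subtractf)
  also have "\<dots> = (\<Sum>i\<in>{1..<l}. (if i = 1 then 1 else 0) * w i - (if i = c - 2 then 1 else 0) * w i
      - 2 * (if c - 1 \<le> i then w i else 0))"
    by (intro sum.cong refl) (subst cW; auto simp: left_diff_distrib)
  also have "\<dots> = w 1 - w (c - 2) - 2 * (\<Sum>i\<in>{1..<l}. if c - 1 \<le> i then w i else 0)"
    using c c' by (simp add: sum_subtractf sum_delta_mult sum_distrib_left)
  finally have W: "wsum (V 2) - wsum (V 1) + wsum (V (c - 1)) - wsum (V (c - 2))
      = w 1 - w (c - 2) - 2 * (\<Sum>i\<in>{1..<l}. if c - 1 \<le> i then w i else 0)" .
  have "ysum (V 2) + wsum (V 2) = \<rho> * y 2" "ysum (V 1) + wsum (V 1) = \<rho> * y 1"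
    "ysum (V (c - 1)) + wsum (V (c - 1)) = \<rho> * y (c - 1)"
    "ysum (V (c - 2)) + wsum (V (c - 2)) = \<rho> * y (c - 2)"
    using eigen_V c c' by auto
  moreover have "c - 1 - 1 = c - 2" by simp
  ultimately show ?thesis
    using Y W unfolding tail_def rdiff_def rpdiff_def by (simp add: algebra_simps)
qed

lemma rdiff_second_difference:
  assumes "2 \<le> j" "j + 1 \<le> l" "j + 2 \<le> c" "c + 1 \<le> l + j"
  shows "\<rho> * (rdiff c (j + 1) - 2 * rdiff c j + rdiff c (j - 1))
    = 2 * rdiff c j + rpdiff c (j - 1) + rpdiff c j"
proof -
  have e: "c - j + 1 = c - (j - 1)" "c - j - 1 = c - (j + 1)"
    "c - 1 - (j - 1) = c - j" "c - 1 - j = c - (j + 1)"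
    using assms by auto
  have "\<rho> * (y (j + 1) - 2 * y j + y (j - 1)) = 2 * y j + w (j - 1) + w j"
    using second_difference assms by auto
  moreover have "\<rho> * (y (c - j + 1) - 2 * y (c - j) + y (c - j - 1)) = 2 * y (c - j) + w (c - j - 1) + w (c - j)"
    using second_difference[of "c - j"] assms by auto
  ultimately show ?thesis
    unfolding rdiff_def rpdiff_def e(3,4) unfolding e(1,2) by (simp add: algebra_simps)
qed

lemma rpdiff_pendants:
  assumes i: "i \<in> tI n a b" "c - 1 - i \<in> tI n a b" and c: "i + 2 \<le> c"
  shows "rpdiff c i = kappa * (rdiff c i + rdiff c (i + 1))"
proof -
  have "c - 1 - i + 1 = c - i" "c - (i + 1) = c - 1 - i"
    using c by auto
  then have "(2 * \<rho> + 3) * rpdiff c i = \<rho> * (rdiff c i + rdiff c (i + 1))"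
    using pendant_eq[OF i(1)] pendant_eq[OF i(2)]
    unfolding rpdiff_def rdiff_def by (simp add: algebra_simps)
  moreover have "0 < 2 * \<rho> + 3"
    using rho_pos by simp
  ultimately show ?thesis
    unfolding kappa_def by (simp add: field_simps)
qed

lemma rdiff_center:
  "rdiff c ((c + 1) div 2) = 0 \<or> rdiff c ((c + 1) div 2) = - rdiff c ((c + 1) div 2 - 1)"
proof (cases "even c")
  case True
  then have "c - (c + 1) div 2 = (c + 1) div 2" by auto
  then show ?thesis unfolding rdiff_def by simp
next
  case False
  then have "c - (c + 1) div 2 = (c + 1) div 2 - 1" "c - ((c + 1) div 2 - 1) = (c + 1) div 2"
    by (auto elim!: oddE)
  then show ?thesis unfolding rdiff_def by simp
qed

definition low_kappa :: "nat \<Rightarrow> real" where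
  "low_kappa i = (if 1 \<le> i \<and> i \<le> a then kappa else 0)"

definition slack :: "nat \<Rightarrow> nat \<Rightarrow> real" where
  "slack c i = low_kappa i * (rdiff c i + rdiff c (i + 1)) - rpdiff c i"

lemma low_kappa_nonneg: "0 \<le> low_kappa i"
  and low_kappa_less_rho: "low_kappa i < \<rho>"
  unfolding low_kappa_def using kappa_pos kappa_less_rho rho_pos by auto

lemma slack_low:
  assumes "1 \<le> i" "i \<le> a" "l + a + 2 \<le> c + b" "c \<le> l + 1"
  shows "slack c i = 0"
proof -
  have "i \<in> tI n a b" "c - 1 - i \<in> tI n a b"
    using assms l_gt b_ge unfolding mem_tI by auto
  then have "rpdiff c i = kappa * (rdiff c i + rdiff c (i + 1))"
    using assms l_gt by (intro rpdiff_pendants) auto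
  then show ?thesis
    unfolding slack_def low_kappa_def using assms by simp
qed

lemma slack_Suc_a_pos:
  assumes "l + a + 2 \<le> c + b" "c \<le> l + 1"
  shows "0 < slack c (a + 1)"
proof -
  have "a + 1 \<notin> tI n a b" "c - 1 - (a + 1) \<in> tI n a b"
    using assms l_gt b_ge unfolding mem_tI by auto
  then show ?thesis
    unfolding slack_def low_kappa_def rpdiff_def using w_pos[of "c - 1 - (a + 1)"]
    by (simp add: w_def)
qed

lemma slack_nonneg:
  assumes "1 \<le> i" "2 * i < c" "l + a + 2 \<le> c + b" "c \<le> l + 1"
  shows "0 \<le> slack c i"
proof (cases "i \<le> a")
  case True
  then show ?thesis using slack_low assms by simp
next
  case False
  then have "i \<notin> tI n a b"
    using assms l_gt unfolding mem_tI by auto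
  then show ?thesis
    using False w_nonneg[of "c - 1 - i"] unfolding slack_def low_kappa_def rpdiff_def
    by (simp add: w_def)
qed

lemma slack_high:
  assumes "a + 2 \<le> i" "2 * i < c" "c + b \<le> l + a + 2"
  shows "slack c i = 0"
proof -
  have "i \<notin> tI n a b" "c - 1 - i \<notin> tI n a b"
    using assms l_gt b_ge unfolding mem_tI by auto
  then show ?thesis
    using assms unfolding slack_def low_kappa_def rpdiff_def w_def by simp
qed

lemma tail_beyond: "tail (l + 1) = 0"
  unfolding tail_def by simp

lemma tail_pos:
  assumes "c \<le> l"
  shows "0 < tail c"
proof -
  have "0 \<le> (if c \<le> k then y k else 0)" if "k \<in> {1..l}" for k
    using y_pos[of k] that by auto
  then have "(if c \<le> l then y l else 0) \<le> (\<Sum>k\<in>{1..l}. if c \<le> k then y k else 0)"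
    using l_gt by (intro member_le_sum) auto
  moreover have "0 < y l" using y_pos l_gt by auto
  moreover have "0 \<le> (\<Sum>i\<in>{1..<l}. if c - 1 \<le> i then w i else 0)"
    by (rule sum_nonneg) (simp add: w_nonneg)
  ultimately show ?thesis
    unfolding tail_def using assms by simp
qed

text \<open>Repeating \<open>rdiff c 1\<close> at index 0 turns the end-of-path identity
  \<open>rdiff_end_difference\<close> into a row of the comparison principle.\<close>
definition rext :: "nat \<Rightarrow> nat \<Rightarrow> real" where
  "rext c k = (if k = 0 then rdiff c 1 else rdiff c k)"

lemma defect_rext:
  assumes "1 \<le> j" "2 * j < c" "4 \<le> c" "c \<le> l + 1"
  shows "defect \<rho> low_kappa (rext c) j = (if j = 1 then 2 * tail c else slack c (j - 1)) + slack c j"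
proof (cases "j = 1")
  case True
  then show ?thesis
    using rdiff_end_difference[of c] assms
    unfolding defect_def rext_def slack_def low_kappa_def
    by (simp add: algebra_simps numeral_2_eq_2)
next
  case False
  then have "2 \<le> j" using assms by simp
  then have "\<rho> * (rdiff c (j + 1) - 2 * rdiff c j + rdiff c (j - 1))
      = 2 * rdiff c j + rpdiff c (j - 1) + rpdiff c j"
    using assms by (intro rdiff_second_difference) auto
  moreover have "j - 1 + 1 = j" "j - 1 \<noteq> 0" using \<open>2 \<le> j\<close> by auto
  ultimately show ?thesis
    using False unfolding defect_def rext_def slack_def by (simp add: algebra_simps)
qed

section \<open>Reflection about the centre of the path\<close>

lemma rdiff_first_pos: "0 < rdiff (l + 1) 1"
proof (rule ccontr)
  assume nonpos: "\<not> 0 < rdiff (l + 1) 1"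
  define g where "g = rext (l + 1)"
  define N where "N = l div 2"
  have N: "a + 1 \<le> N" "2 * N \<le> l" "l \<le> 2 * N + 1" "(l + 1 + 1) div 2 = N + 1"
    using l_gt b_ge unfolding N_def by auto
  have c: "l + a + 2 \<le> l + 1 + b" "4 \<le> l + 1"
    using l_gt b_ge by auto
  have defect_eq: "defect \<rho> low_kappa g j = (if j = 1 then 0 else slack (l + 1) (j - 1)) + slack (l + 1) j"
    if "1 \<le> j" "j \<le> N" for j
    using defect_rext[of j "l + 1"] that N c tail_beyond unfolding g_def by simp
  have defect: "0 \<le> defect \<rho> low_kappa g j" if "1 \<le> j" "j \<le> N" for j
    using defect_eq[OF that] slack_nonneg[of "j - 1" "l + 1"] slack_nonneg[of j "l + 1"] that N c
    by auto
  have strict: "0 < defect \<rho> low_kappa g (a + 1)"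
    using defect_eq[of "a + 1"] slack_nonneg[of a "l + 1"] slack_Suc_a_pos[of "l + 1"] N c
    by auto
  have start: "g 1 \<le> 0" "g 1 \<le> g 0" "g 0 + g 1 \<le> 0"
    using nonpos unfolding g_def rext_def by auto
  note k = low_kappa_nonneg low_kappa_less_rho
  have "g (a + 2) < g (a + 1)"
    using defect_strict_decrease[OF k defect start, where j = "a + 1"] strict N by simp
  moreover have "g (N + 1) \<le> g (a + 2)"
    using defect_antimono_le[OF k defect start, where i = "a + 2" and m = "N + 1"] N by simp
  moreover have "g (a + 1) \<le> 0" "g N \<le> 0"
    using defect_antimono[OF k defect start, where m = a] defect_antimono[OF k defect start, where m = "N - 1"] N
    by auto
  ultimately have "rdiff (l + 1) (N + 1) < 0" "rdiff (l + 1) N \<le> 0"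
    using N unfolding g_def rext_def by auto
  then show False
    using rdiff_center[of "l + 1"] N by auto
qed

lemma rdiff_low_increasing:
  assumes "1 \<le> j" "j \<le> a"
  shows "rdiff (l + 1) j < rdiff (l + 1) (j + 1)" and "0 < rdiff (l + 1) (j + 1)"
proof -
  define g where "g k = - rext (l + 1) k" for k
  have c: "l + a + 2 \<le> l + 1 + b" "4 \<le> l + 1"
    using l_gt b_ge by auto
  have defect: "0 \<le> defect \<rho> low_kappa g j" if "1 \<le> j" "j \<le> a" for j
    using defect_rext[of j "l + 1"] slack_low[of "j - 1" "l + 1"] slack_low[of j "l + 1"]
      tail_beyond that c l_gt b_ge
    unfolding g_def defect_uminus by auto
  have start: "g 1 \<le> 0" "g 1 \<le> g 0" "g 0 + g 1 \<le> 0" and "g 1 < 0"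
    using rdiff_first_pos unfolding g_def rext_def by auto
  note k = low_kappa_nonneg low_kappa_less_rho
  show "rdiff (l + 1) j < rdiff (l + 1) (j + 1)"
    using defect_strict_decrease[where N = a, OF k defect start assms] \<open>g 1 < 0\<close> assms
    unfolding g_def rext_def by simp
  show "0 < rdiff (l + 1) (j + 1)"
    using defect_antimono_le[where N = a and i = 1 and m = "j + 1", OF k defect start] \<open>g 1 < 0\<close> assms
    unfolding g_def rext_def by simp
qed

lemma rdiff_low_pos: "1 \<le> k \<Longrightarrow> k \<le> a + 1 \<Longrightarrow> 0 < rdiff (l + 1) k"
  using rdiff_first_pos rdiff_low_increasing(2)[of "k - 1"] by (cases "k = 1") auto

lemma rpdiff_low_nonneg:
  assumes "1 \<le> i" "i \<le> a"
  shows "0 \<le> rpdiff (l + 1) i"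
proof -
  have "rpdiff (l + 1) i = kappa * (rdiff (l + 1) i + rdiff (l + 1) (i + 1))"
    using slack_low[of i "l + 1"] assms b_ge unfolding slack_def low_kappa_def by simp
  then show ?thesis
    using rdiff_low_pos[of i] rdiff_low_pos[of "i + 1"] kappa_pos assms by simp
qed

lemma rpdiff_less_rdiff:
  assumes "1 \<le> i" "i \<le> a"
  shows "rpdiff (l + 1) i < rdiff (l + 1) (i + 1)"
proof -
  have "rpdiff (l + 1) i = kappa * (rdiff (l + 1) i + rdiff (l + 1) (i + 1))"
    using slack_low[of i "l + 1"] assms b_ge unfolding slack_def low_kappa_def by simp
  also have "\<dots> < (2 * kappa) * rdiff (l + 1) (i + 1)"
    using rdiff_low_increasing(1)[OF assms] kappa_pos by (simp add: algebra_simps)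
  also have "\<dots> < rdiff (l + 1) (i + 1)"
    using two_kappa_less_1 rdiff_low_increasing(2)[OF assms] by simp
  finally show ?thesis .
qed

lemma low_reflected_differences:
  assumes "1 \<le> i" "i \<le> a"
  shows "x (V i) - x (V (l + 1 - i)) < x (V (i + 1)) - x (V (l - i))
    \<and> x (W i) - x (W (l - i)) < x (V (i + 1)) - x (V (l - i))"
proof -
  have "i \<in> tI n a b" "l - i \<in> tI n a b" "l + 1 - (i + 1) = l - i" "l + 1 - 1 - i = l - i"
    using assms l_gt b_ge unfolding mem_tI by auto
  then show ?thesis
    using rdiff_low_increasing(1)[OF assms] rpdiff_less_rdiff[OF assms]
    unfolding rdiff_def rpdiff_def y_def w_def by simp
qed

section \<open>Reflection about the midpoint of \<open>v\<^sub>a\<^sub>+\<^sub>1\<close> and \<open>v\<^sub>l\<^sub>-\<^sub>b\<^sub>+\<^sub>1\<close>\<close>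

definition c2 :: nat where
  "c2 = l + a + 2 - b"

definition h2 :: nat where
  "h2 = (c2 + 1) div 2"

lemma c2_h2_bounds: "2 * a + 5 \<le> c2" "c2 \<le> l" "l + a + 2 = c2 + b" "a + 3 \<le> h2" "c2 \<le> 2 * h2" "2 * h2 \<le> c2 + 1"
  using l_gt b_ge unfolding c2_def h2_def by auto

lemma rdiff_c2_before_center_pos: "0 < rdiff c2 (h2 - 1)"
proof (rule ccontr)
  assume nonpos: "\<not> 0 < rdiff c2 (h2 - 1)"
  define g where "g m = rext c2 (h2 - m)" for m
  define k where "k i = low_kappa (h2 - 1 - i)" for i
  have defect_eq: "defect \<rho> k g m = (if h2 - m = 1 then 2 * tail c2 else slack c2 (h2 - m - 1)) + slack c2 (h2 - m)"
    if "1 \<le> m" "m \<le> h2 - 1" for m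
    using defect_reverse[of m h2 \<rho> low_kappa "rext c2"] defect_rext[of "h2 - m" c2] that c2_h2_bounds
    unfolding g_def k_def by auto
  have defect: "0 \<le> defect \<rho> k g m" if "1 \<le> m" "m \<le> h2 - 1" for m
    using defect_eq[OF that] tail_pos[of c2] slack_nonneg[of "h2 - m - 1" c2] slack_nonneg[of "h2 - m" c2]
      that c2_h2_bounds
    by (auto simp: less_imp_le)
  have strict: "0 < defect \<rho> k g (h2 - 1)"
    using defect_eq[of "h2 - 1"] tail_pos[of c2] slack_nonneg[of 1 c2] c2_h2_bounds by auto
  have start: "g 1 \<le> 0" "g 1 \<le> g 0" "g 0 + g 1 \<le> 0"
    using nonpos rdiff_center[of c2] c2_h2_bounds unfolding g_def rext_def h2_def by auto
  have "g (h2 - 1 + 1) < g (h2 - 1)"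
    using defect_strict_decrease[OF _ _ defect start, where j = "h2 - 1"] strict c2_h2_bounds
      low_kappa_nonneg low_kappa_less_rho unfolding k_def by auto
  moreover have "g (h2 - 1 + 1) = g (h2 - 1)"
    using c2_h2_bounds unfolding g_def rext_def by auto
  ultimately show False by simp
qed

lemma rdiff_c2_decreasing:
  assumes "a + 3 \<le> j" "j \<le> h2 - 1"
  shows "rdiff c2 j < rdiff c2 (j - 1)" and "0 < rdiff c2 j"
proof -
  define g where "g m = - rext c2 (h2 - m)" for m
  define k where "k i = low_kappa (h2 - 1 - i)" for i
  have defect: "0 \<le> defect \<rho> k g m" if "1 \<le> m" "m \<le> h2 - a - 3" for m
    using defect_reverse[of m h2 \<rho> low_kappa "rext c2"] defect_rext[of "h2 - m" c2]
      slack_high[of "h2 - m - 1" c2] slack_high[of "h2 - m" c2] that c2_h2_bounds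
    unfolding g_def k_def defect_uminus by auto
  have start: "g 1 \<le> 0" "g 1 \<le> g 0" "g 0 + g 1 \<le> 0" and "g 1 < 0"
    using rdiff_c2_before_center_pos rdiff_center[of c2] c2_h2_bounds unfolding g_def rext_def h2_def by auto
  have k: "0 \<le> k i" "k i < \<rho>" for i
    unfolding k_def using low_kappa_nonneg low_kappa_less_rho by auto
  have m: "1 \<le> h2 - j" "h2 - j \<le> h2 - a - 3" "h2 - (h2 - j) = j" "h2 - (h2 - j + 1) = j - 1"
    using assms c2_h2_bounds by auto
  show "rdiff c2 j < rdiff c2 (j - 1)"
    using defect_strict_decrease[where N = "h2 - a - 3", OF k defect start m(1,2)] \<open>g 1 < 0\<close> assms
    unfolding g_def rext_def m(3,4) by simp
  show "0 < rdiff c2 j"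
    using defect_antimono_le[where N = "h2 - a - 3" and i = 1 and m = "h2 - j", OF k defect start] \<open>g 1 < 0\<close> m assms
    unfolding g_def rext_def by simp
qed

lemma middle_reflected_differences:
  assumes "1 \<le> i" "i \<le> (l - b - a - 1) div 2 - 1"
  shows "x (V (a + 1 + i)) - x (V (l - b + 1 - i)) > x (V (a + 2 + i)) - x (V (l - b - i))
    \<and> x (V (a + 2 + i)) - x (V (l - b - i)) > 0"
proof -
  have "h2 = (l - b - a - 1) div 2 + a + 2"
    using l_gt b_ge unfolding h2_def c2_def by auto
  then have "a + 3 \<le> a + 2 + i" "a + 2 + i \<le> h2 - 1" "c2 - (a + 2 + i) = l - b - i"
    "c2 - (a + 2 + i - 1) = l - b + 1 - i" "a + 2 + i - 1 = a + 1 + i"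
    using assms l_gt b_ge unfolding c2_def by auto
  then show ?thesis
    using rdiff_c2_decreasing[of "a + 2 + i"] unfolding rdiff_def y_def by simp
qed

section \<open>Comparison of \<open>v\<^sub>l\<^sub>-\<^sub>b\<^sub>+\<^sub>1\<close> and \<open>v\<^sub>l\<^sub>-\<^sub>a\<close>\<close>

definition cs :: nat where
  "cs = l - b + 1"

definition ct :: nat where
  "ct = l - a"

definition c3 :: nat where
  "c3 = cs + ct"

definition h3 :: nat where
  "h3 = (c3 + 1) div 2"

lemma cs_ct_bounds: "a + 2 \<le> cs" "cs + 1 \<le> ct" "ct + a = l" "cs + b = l + 1"
  "cs + 1 \<le> h3" "c3 \<le> 2 * h3" "2 * h3 \<le> c3 + 1" "c3 = cs + ct"
  using l_gt b_ge unfolding cs_def ct_def c3_def h3_def by auto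

lemma rpdiff_c3:
  assumes "cs \<le> i" "i + 1 \<le> ct"
  shows "rpdiff c3 i = kappa * (rdiff c3 i + rdiff c3 (i + 1))"
proof -
  have "i \<in> tI n a b" "c3 - 1 - i \<in> tI n a b"
    using assms cs_ct_bounds unfolding mem_tI by auto
  then show ?thesis
    using assms cs_ct_bounds by (intro rpdiff_pendants) auto
qed

lemma defect_c3_reverse:
  assumes "1 \<le> m" "m \<le> h3 - cs - 1"
  shows "defect \<rho> (\<lambda>_. kappa) (\<lambda>m. rdiff c3 (h3 - m)) m = 0"
proof -
  define j where "j = h3 - m"
  have j: "cs + 1 \<le> j" "2 * j < c3" "1 \<le> m" "m < h3" "j - 1 + 1 = j"
    using assms cs_ct_bounds unfolding j_def by auto
  have "\<rho> * (rdiff c3 (j + 1) - 2 * rdiff c3 j + rdiff c3 (j - 1))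
      = 2 * rdiff c3 j + rpdiff c3 (j - 1) + rpdiff c3 j"
    using j cs_ct_bounds by (intro rdiff_second_difference) auto
  moreover have "rpdiff c3 (j - 1) = kappa * (rdiff c3 (j - 1) + rdiff c3 j)"
    "rpdiff c3 j = kappa * (rdiff c3 j + rdiff c3 (j + 1))"
    using rpdiff_c3[of "j - 1"] rpdiff_c3[of j] j cs_ct_bounds by auto
  ultimately have "defect \<rho> (\<lambda>_. kappa) (rdiff c3) j = 0"
    unfolding defect_def by (simp add: algebra_simps)
  then show ?thesis
    using defect_reverse[of m h3 \<rho> "\<lambda>_. kappa" "rdiff c3"] j unfolding j_def by simp
qed

lemma y_cs_less_ct_if_neg:
  assumes neg: "rdiff c3 (h3 - 1) < 0"
  shows "y cs < y ct"
proof -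
  define g where "g m = rdiff c3 (h3 - m)" for m
  have defect: "0 \<le> defect \<rho> (\<lambda>_. kappa) g m" if "1 \<le> m" "m \<le> h3 - cs - 1" for m
    using defect_c3_reverse[OF that] unfolding g_def by simp
  have k: "0 \<le> kappa" "kappa < \<rho>"
    using kappa_pos kappa_less_rho by auto
  have start: "g 1 \<le> 0" "g 1 \<le> g 0" "g 0 + g 1 \<le> 0"
    using neg rdiff_center[of c3] unfolding g_def h3_def by auto
  have "g (h3 - cs) \<le> g 1"
    using defect_antimono_le[where N = "h3 - cs - 1" and i = 1 and m = "h3 - cs", OF k defect start]
      cs_ct_bounds by simp
  moreover have "g (h3 - cs) = y cs - y ct"
    using cs_ct_bounds unfolding g_def rdiff_def by auto
  ultimately show ?thesis
    using neg unfolding g_def by simp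
qed

lemma rdiff_c3_nonneg:
  assumes nonneg: "0 \<le> rdiff c3 (h3 - 1)" and j: "cs \<le> j" "2 * j \<le> c3"
  shows "0 \<le> rdiff c3 j"
proof (cases "2 * j = c3")
  case True
  then have "c3 - j = j" by simp
  then show ?thesis unfolding rdiff_def by simp
next
  case False
  define g where "g m = - rdiff c3 (h3 - m)" for m
  have defect: "0 \<le> defect \<rho> (\<lambda>_. kappa) g m" if "1 \<le> m" "m \<le> h3 - cs - 1" for m
    using defect_c3_reverse[OF that] unfolding g_def defect_uminus by simp
  have k: "0 \<le> kappa" "kappa < \<rho>"
    using kappa_pos kappa_less_rho by auto
  have start: "g 1 \<le> 0" "g 1 \<le> g 0" "g 0 + g 1 \<le> 0"
    using nonneg rdiff_center[of c3] unfolding g_def h3_def by auto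
  have "g (h3 - j - 1 + 1) \<le> 0"
    using defect_antimono[where N = "h3 - cs - 1" and m = "h3 - j - 1", OF k defect start]
      j False cs_ct_bounds by auto
  moreover have "h3 - (h3 - j - 1 + 1) = j"
    using j False cs_ct_bounds by auto
  ultimately show ?thesis
    unfolding g_def by simp
qed

lemma rdiff_c3_weighted_nonneg:
  assumes nonneg: "0 \<le> rdiff c3 (h3 - 1)" and k: "cs < k" "k < ct"
  shows "0 \<le> (real cs + real ct - 2 * real k) * rdiff c3 k"
proof (cases "2 * k \<le> c3")
  case True
  then show ?thesis
    using rdiff_c3_nonneg[OF nonneg] k cs_ct_bounds by simp
next
  case False
  then have "0 \<le> (2 * real k - real cs - real ct) * rdiff c3 (c3 - k)"
    using rdiff_c3_nonneg[OF nonneg, of "c3 - k"] k cs_ct_bounds by simp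
  moreover have "rdiff c3 (c3 - k) = - rdiff c3 k"
    using k cs_ct_bounds unfolding rdiff_def by auto
  ultimately show ?thesis by (simp add: algebra_simps)
qed

lemma rpdiff_c3_weighted_nonneg:
  assumes nonneg: "0 \<le> rdiff c3 (h3 - 1)" and i: "cs \<le> i" "i < ct"
  shows "0 \<le> (real cs + real ct - 1 - 2 * real i) * rpdiff c3 i"
proof -
  have pair_nonneg: "0 \<le> rpdiff c3 j" if "cs \<le> j" "2 * j + 1 < c3" for j
    using rpdiff_c3[of j] rdiff_c3_nonneg[OF nonneg, of j] rdiff_c3_nonneg[OF nonneg, of "j + 1"]
      kappa_pos that cs_ct_bounds by simp
  show ?thesis
  proof (cases "2 * i + 1" c3 rule: linorder_cases)
    case less
    then show ?thesis using pair_nonneg i cs_ct_bounds by simp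
  next
    case equal
    then have "real cs + real ct - 1 - 2 * real i = 0"
      using cs_ct_bounds by (simp flip: of_nat_add)
    then show ?thesis by simp
  next
    case greater
    then have "0 \<le> (2 * real i + 1 - real cs - real ct) * rpdiff c3 (c3 - 1 - i)"
      using pair_nonneg[of "c3 - 1 - i"] i cs_ct_bounds by simp
    moreover have "c3 - 1 - (c3 - 1 - i) = i"
      using i cs_ct_bounds by auto
    then have "rpdiff c3 (c3 - 1 - i) = - rpdiff c3 i"
      unfolding rpdiff_def by simp
    ultimately show ?thesis by (simp add: algebra_simps)
  qed
qed

definition coeffV :: "nat \<Rightarrow> real" where
  "coeffV k = real (tdist (V ct) (V k)) - real (tdist (V cs) (V k))"

definition coeffW :: "nat \<Rightarrow> real" where
  "coeffW i = real (tdist (V ct) (W i)) - real (tdist (V cs) (W i))"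

text \<open>Pairing for the terms of the eigen-equation difference: \<open>v\<^sub>k\<close> with \<open>k \<le> a + 1\<close> or
  \<open>ct \<le> k\<close> is reflected about the centre of the path, \<open>v\<^sub>k\<close> strictly between \<open>v\<^sub>c\<^sub>s\<close> and
  \<open>v\<^sub>c\<^sub>t\<close> about their midpoint, and the remaining ones are fixed; likewise for pendants.\<close>
definition mirrorV :: "nat \<Rightarrow> nat" where
  "mirrorV k = (if k \<le> a + 1 \<or> ct \<le> k then l + 1 - k else if cs < k \<and> k < ct then c3 - k else k)"

definition mirrorW :: "nat \<Rightarrow> nat" where
  "mirrorW i = (if i \<le> a \<or> ct \<le> i then l - i else if cs \<le> i \<and> i < ct then c3 - 1 - i else i)"

lemma coeffV_below: "k \<le> cs \<Longrightarrow> coeffV k = real ct - real cs"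
  and coeffV_above: "ct \<le> k \<Longrightarrow> coeffV k = real cs - real ct"
  and coeffV_between: "cs \<le> k \<Longrightarrow> k \<le> ct \<Longrightarrow> coeffV k = real cs + real ct - 2 * real k"
  using cs_ct_bounds unfolding coeffV_def by (auto simp: real_tdist_VV abs_if)

lemma coeffW_below: "i < cs \<Longrightarrow> coeffW i = real ct - real cs"
  and coeffW_above: "ct \<le> i \<Longrightarrow> coeffW i = real cs - real ct"
  and coeffW_between: "cs \<le> i \<Longrightarrow> i < ct \<Longrightarrow> coeffW i = real cs + real ct - 1 - 2 * real i"
  using cs_ct_bounds unfolding coeffW_def by (auto simp: real_tdist_VW)

lemma mirrorV_involution: "k \<in> {1..l} \<Longrightarrow> mirrorV k \<in> {1..l} \<and> mirrorV (mirrorV k) = k"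
  using cs_ct_bounds unfolding mirrorV_def by auto

lemma mirrorW_involution: "i \<in> {1..<l} \<Longrightarrow> mirrorW i \<in> {1..<l} \<and> mirrorW (mirrorW i) = i"
  using cs_ct_bounds unfolding mirrorW_def by auto

lemma coeffV_pair_nonneg:
  assumes nonneg: "0 \<le> rdiff c3 (h3 - 1)" and k: "k \<in> {1..l}"
  shows "0 \<le> coeffV k * y k + coeffV (mirrorV k) * y (mirrorV k)"
proof -
  have d: "0 < real ct - real cs" using cs_ct_bounds by simp
  consider "k \<le> a + 1" | "ct \<le> k" | "cs < k \<and> k < ct" | "a + 1 < k \<and> k \<le> cs"
    using cs_ct_bounds by arith
  then show ?thesis
  proof cases
    case 1
    then have m: "mirrorV k = l + 1 - k" "coeffV k = real ct - real cs" "coeffV (l + 1 - k) = real cs - real ct"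
      using cs_ct_bounds unfolding mirrorV_def by (auto simp: coeffV_below coeffV_above)
    have "0 \<le> (real ct - real cs) * rdiff (l + 1) k"
      using rdiff_low_pos[of k] 1 k d by (auto intro!: mult_nonneg_nonneg)
    then show ?thesis
      unfolding m rdiff_def by (simp add: algebra_simps)
  next
    case 2
    then have m: "mirrorV k = l + 1 - k" "coeffV k = real cs - real ct" "coeffV (l + 1 - k) = real ct - real cs"
      "l + 1 - (l + 1 - k) = k"
      using cs_ct_bounds k unfolding mirrorV_def by (auto simp: coeffV_below coeffV_above)
    have "0 < rdiff (l + 1) (l + 1 - k)"
      using 2 k cs_ct_bounds by (intro rdiff_low_pos) auto
    then have "0 \<le> (real ct - real cs) * rdiff (l + 1) (l + 1 - k)"
      using d by simp
    then show ?thesis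
      unfolding m rdiff_def m(4) by (simp add: algebra_simps)
  next
    case 3
    then have m: "mirrorV k = c3 - k" "coeffV k = real cs + real ct - 2 * real k"
      "coeffV (c3 - k) = real cs + real ct - 2 * real (c3 - k)" "c3 - (c3 - k) = k"
      "real (c3 - k) = real cs + real ct - real k"
      using cs_ct_bounds unfolding mirrorV_def by (auto simp: coeffV_between of_nat_diff)
    moreover have "0 \<le> (real cs + real ct - 2 * real k) * rdiff c3 k"
      using rdiff_c3_weighted_nonneg[OF nonneg] 3 by simp
    then show ?thesis
      unfolding m rdiff_def m(4) by (simp add: algebra_simps)
  next
    case 4
    then have "mirrorV k = k" "coeffV k = real ct - real cs"
      using cs_ct_bounds unfolding mirrorV_def by (auto simp: coeffV_below)
    moreover have "0 < y k" using y_pos k by simp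
    ultimately show ?thesis using d by simp
  qed
qed

lemma coeffW_pair_nonneg:
  assumes nonneg: "0 \<le> rdiff c3 (h3 - 1)" and i: "i \<in> {1..<l}"
  shows "0 \<le> coeffW i * w i + coeffW (mirrorW i) * w (mirrorW i)"
proof -
  have d: "0 < real ct - real cs" using cs_ct_bounds by simp
  consider "i \<le> a" | "ct \<le> i" | "cs \<le> i \<and> i < ct" | "a < i \<and> i < cs"
    using cs_ct_bounds by arith
  then show ?thesis
  proof cases
    case 1
    then have m: "mirrorW i = l - i" "coeffW i = real ct - real cs" "coeffW (l - i) = real cs - real ct"
      using cs_ct_bounds unfolding mirrorW_def by (auto simp: coeffW_below coeffW_above)
    have "0 \<le> (real ct - real cs) * rpdiff (l + 1) i"
      using rpdiff_low_nonneg 1 i d by simp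
    then show ?thesis
      unfolding m rpdiff_def by (simp add: algebra_simps)
  next
    case 2
    then have m: "mirrorW i = l - i" "coeffW i = real cs - real ct" "coeffW (l - i) = real ct - real cs"
      "l + 1 - 1 - (l - i) = i"
      using cs_ct_bounds i unfolding mirrorW_def by (auto simp: coeffW_below coeffW_above)
    have "0 \<le> (real ct - real cs) * rpdiff (l + 1) (l - i)"
      using rpdiff_low_nonneg[of "l - i"] 2 i cs_ct_bounds d by simp
    then show ?thesis
      unfolding m rpdiff_def m(4) by (simp add: algebra_simps)
  next
    case 3
    then have m: "mirrorW i = c3 - 1 - i" "coeffW i = real cs + real ct - 1 - 2 * real i"
      "coeffW (c3 - 1 - i) = real cs + real ct - 1 - 2 * real (c3 - 1 - i)" "c3 - 1 - (c3 - 1 - i) = i"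
      "real (c3 - 1 - i) = real cs + real ct - 1 - real i"
      using cs_ct_bounds unfolding mirrorW_def by (auto simp: coeffW_between of_nat_diff)
    have "0 \<le> (real cs + real ct - 1 - 2 * real i) * rpdiff c3 i"
      using rpdiff_c3_weighted_nonneg[OF nonneg] 3 by simp
    then show ?thesis
      unfolding m rpdiff_def m(4) by (simp add: algebra_simps)
  next
    case 4
    then have "mirrorW i = i" "coeffW i = real ct - real cs"
      using cs_ct_bounds unfolding mirrorW_def by (auto simp: coeffW_below)
    then show ?thesis using d w_nonneg[of i] by simp
  qed
qed

lemma y_cs_less_ct: "y cs < y ct"
proof (cases "rdiff c3 (h3 - 1) < 0")
  case True
  then show ?thesis by (rule y_cs_less_ct_if_neg)
next
  case False
  then have nonneg: "0 \<le> rdiff c3 (h3 - 1)" by simp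
  have "\<rho> * (y ct - y cs) = (\<Sum>k\<in>{1..l}. coeffV k * y k) + (\<Sum>i\<in>{1..<l}. coeffW i * w i)"
    unfolding coeffV_def coeffW_def using cs_ct_bounds by (intro eigen_difference) auto
  moreover have "2 * (\<Sum>k\<in>{1..l}. coeffV k * y k)
      = (\<Sum>k\<in>{1..l}. coeffV k * y k + coeffV (mirrorV k) * y (mirrorV k))"
    using mirrorV_involution by (intro sum_involution_double) auto
  moreover have "coeffV cs * y cs + coeffV (mirrorV cs) * y (mirrorV cs)
      \<le> (\<Sum>k\<in>{1..l}. coeffV k * y k + coeffV (mirrorV k) * y (mirrorV k))"
    using cs_ct_bounds coeffV_pair_nonneg[OF nonneg] by (intro member_le_sum) auto
  moreover have "0 < coeffV cs * y cs + coeffV (mirrorV cs) * y (mirrorV cs)"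
    using cs_ct_bounds y_pos[of cs] unfolding mirrorV_def by (simp add: coeffV_below)
  moreover have "2 * (\<Sum>i\<in>{1..<l}. coeffW i * w i)
      = (\<Sum>i\<in>{1..<l}. coeffW i * w i + coeffW (mirrorW i) * w (mirrorW i))"
    using mirrorW_involution by (intro sum_involution_double) auto
  moreover have "0 \<le> (\<Sum>i\<in>{1..<l}. coeffW i * w i + coeffW (mirrorW i) * w (mirrorW i))"
    using coeffW_pair_nonneg[OF nonneg] by (intro sum_nonneg) auto
  ultimately have "0 < \<rho> * (y ct - y cs)"
    by linarith
  then show ?thesis
    using rho_pos by (simp add: zero_less_mult_iff)
qed

lemma x_V_l_minus_b_less: "x (V (l - b + 1)) < x (V (l - a))"
  using y_cs_less_ct unfolding cs_def ct_def y_def .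

end

theorem lemma3p3:
  fixes n a b l :: nat and x :: "vtx \<Rightarrow> real"
  assumes hb: "b \<ge> a + 2"
    and hn: "2 * (a + b) < n - 1"
    and hl: "l = n - a - b"
    and hx: "perron_vector (tVerts n a b) (dist_matrix (tEdges n a b)) x"
    and hbl: "real b < real l / 2"
  shows "(a \<ge> 1 \<longrightarrow> (\<forall>i\<in>{1..a}.
            x (V i) - x (V (l + 1 - i)) < x (V (i + 1)) - x (V (l - i)) \<and>
            x (W i) - x (W (l - i)) < x (V (i + 1)) - x (V (l - i))))
       \<and> (\<forall>i\<in>{1 .. (l - b - a - 1) div 2 - 1}.
            x (V (a + 1 + i)) - x (V (l - b + 1 - i)) > x (V (a + 2 + i)) - x (V (l - b - i)) \<and>
            x (V (a + 2 + i)) - x (V (l - b - i)) > 0)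
       \<and> x (V (l - b + 1)) < x (V (l - a))"
proof -
  \<comment> \<open>\<open>hn\<close> is implied by \<open>hb\<close> and \<open>hbl\<close>.\<close>
  obtain \<rho> where "\<forall>v\<in>tVerts n a b. 0 < x v"
    and "\<forall>v\<in>tVerts n a b. (\<Sum>u\<in>tVerts n a b. dist_matrix (tEdges n a b) v u * x u) = \<rho> * x v"
    using hx unfolding perron_vector_def by blast
  moreover have "2 * b < l"
    using hbl by linarith
  ultimately interpret T_eigenvector n a b l x \<rho>
    using hb hl by unfold_locales auto
  show ?thesis
    using low_reflected_differences middle_reflected_differences x_V_l_minus_b_less by auto
qed

end
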